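(* Assume $\frac1{\alpha^2}\ge\frac45+\mu$ for a constant $\mu>0$. There is $a_0>0$ depending only on $S$ and $\mu$ such that for all $0<a\le\min(a_0,\lambda/2)$ and every $t\ge0$: if $x^s_{N/4}(t)\ge0$, then $$\mathbb E\left[\Psi(x^s(t+1))\,\middle|\,x^s(t)\right]\le\left(1-\frac{3\mu a}{4N}\right)\Psi(x^s(t))+1.$$
   Context: Weighted balls into weighted bins: $n$ bins with positive integer weights $N_1,\dots,N_n$, $N=\sum_iN_i$; $\mathcal D$ on $[n]$ is $(\alpha,\beta)$-biased, i.e. $\frac{N_i}{\alpha N}\le\Pr_{\mathcal D}[i]\le\frac{\beta N_i}{N}$, $\alpha,\beta\ge1$. Ball weights $w(t)$ are i.i.d. from $\mathcal W$ on $[0,\infty)$ with $\mathbb E[\mathcal W]=1$ and $M(z)=\mathbb E[e^{z\mathcal W}]$ finite at $z=\lambda$ for some $\lambda>0$; $S\ge1$ is a constant with $M''(z)\le2S$ for all $|z|<\lambda/2$. Each round two bins are sampled independently from $\mathcal D$ and the ball goes to the sampled bin with smaller value $v_i(t-1)=w_i(t-1)/N_i$. Slot formulation: bin $i$ consists of $N_i$ unit slots; the normalized slot vector $x^s(t)\in\mathbb R^N$ has, for each slot of bin $i$, the entry $v_i(t)-\frac1N\sum_{t'\le t}w(t')$, indexed so that $x^s_1(t)\ge\dots\ge x^s_N(t)$; fractional indices such as $N/4$ are rounded up. $\Psi(y)=\sum_je^{-ay_j}$. *)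

theory Defs
  imports "HOL-Probability.Probability"
begin

text \<open>Bins are indexed by 0..<n; bin i has positive integer weight Nw i.\<close>

definition Ntot :: "nat \<Rightarrow> (nat \<Rightarrow> nat) \<Rightarrow> nat" where
  "Ntot n Nw = (\<Sum>i<n. Nw i)"

definition bval :: "(nat \<Rightarrow> nat) \<Rightarrow> (nat \<Rightarrow> real) \<Rightarrow> nat \<Rightarrow> real" where
  "bval Nw w i = w i / real (Nw i)"

text \<open>Normalised slot vector, sorted non-increasingly: each bin i contributes Nw i slots
  with entry v_i - (total weight)/N. Total weight allocated so far = sum of loads.\<close>
definition slot_vec :: "nat \<Rightarrow> (nat \<Rightarrow> nat) \<Rightarrow> (nat \<Rightarrow> real) \<Rightarrow> real list" where
  "slot_vec n Nw w =
     rev (sort (concat (map (\<lambda>i. replicate (Nw i)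
        (bval Nw w i - (\<Sum>k<n. w k) / real (Ntot n Nw))) [0..<n])))"

text \<open>1-indexed entry x^s_k.\<close>
definition slot_at :: "real list \<Rightarrow> nat \<Rightarrow> real" where
  "slot_at xs k = xs ! (k - 1)"

definition Psi :: "real \<Rightarrow> real list \<Rightarrow> real" where
  "Psi a ys = sum_list (map (\<lambda>y. exp (- a * y)) ys)"

text \<open>Valid allocation rule: sel i j is the bin among the two sampled bins i, j that
  receives the ball (the one with smaller value; ties broken arbitrarily).\<close>
definition valid_sel :: "nat \<Rightarrow> (nat \<Rightarrow> nat) \<Rightarrow> (nat \<Rightarrow> real) \<Rightarrow> (nat \<Rightarrow> nat \<Rightarrow> nat) \<Rightarrow> bool" where
  "valid_sel n Nw w sel \<longleftrightarrow> (\<forall>i<n. \<forall>j<n. sel i j \<in> {i, j}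
      \<and> (bval Nw w i < bval Nw w j \<longrightarrow> sel i j = i)
      \<and> (bval Nw w j < bval Nw w i \<longrightarrow> sel i j = j))"

text \<open>Expectation of Psi of the slot vector after one round, given the current load vector w:
  two bins i, j drawn independently from p, ball weight x drawn from W.\<close>
definition step_exp :: "nat \<Rightarrow> (nat \<Rightarrow> nat) \<Rightarrow> (nat \<Rightarrow> real) \<Rightarrow> real measure
      \<Rightarrow> (nat \<Rightarrow> nat \<Rightarrow> nat) \<Rightarrow> real \<Rightarrow> (nat \<Rightarrow> real) \<Rightarrow> real" where
  "step_exp n Nw p W sel a w =
     (\<Sum>i<n. \<Sum>j<n. p i * p j *
        integral\<^sup>L W (\<lambda>x. Psi a (slot_vec n Nw (w(sel i j := w (sel i j) + x)))))"

definition mgf :: "real measure \<Rightarrow> real \<Rightarrow> real" where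
  "mgf W z = integral\<^sup>L W (\<lambda>x. exp (z * x))"

end

(*
  Write Psi = sum_i N_i exp(-a x_i), where x_i is the normalised value of bin i (every slot of bin i
  carries x_i).  A ball of weight X placed into bin k multiplies Psi by exp(a X / N) and the k-th
  summand additionally by exp(-a X / N_k); the quadratic bound M(z) <= 1 + z + S z^2 on the moment
  generating function therefore gives
    E[Psi'] <= Psi (1 + a/N + S (a/N)^2) - a (1 - S a) E[exp(-a x_chosen)].
  The ball goes to the smaller of two sampled values, so for a set A of lowest-valued bins of
  probability mass q >= N(A) / (alpha N) it lands in A with probability at least q (2 - q).  When
  N(A) <= 3N/4, which the hypothesis x_{N/4} >= 0 guarantees for all A inside the negative bins,
  this exceeds (1 + mu) N(A) / N.  A layer-cake decomposition of max(exp(-a x) - 1, 0) turns this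
  into E[exp(-a x_chosen)] >= (1 + mu) (Psi - N) / N, and for small a the drift becomes
  -(3 mu a / 4N) Psi + 1.
*)

theory Submission
  imports Defs
begin

lemma power_le_exp:
  fixes u :: real
  assumes "u \<ge> 0"
  shows "u ^ j \<le> real j ^ j * exp u"
proof (cases "j = 0")
  case False
  have "u / j \<le> exp (u / j)"
    using exp_ge_add_one_self[of "u / j"] by linarith
  then have "(u / j) ^ j \<le> exp (u / j) ^ j"
    using assms by (intro power_mono) auto
  also have "\<dots> = exp u"
    using False by (simp add: exp_of_nat_mult[symmetric])
  finally have "real j ^ j * (u / j) ^ j \<le> real j ^ j * exp u"
    by (intro mult_left_mono) auto
  then show ?thesis
    using False by (simp add: power_divide)
qed (use assms in simp)

lemma abs_exp_diff_le:
  fixes a b :: real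
  shows "\<bar>exp b - exp a\<bar> \<le> \<bar>b - a\<bar> * exp (max a b)"
proof -
  have *: "exp d - exp c \<le> (d - c) * exp d" if "c \<le> d" for c d :: real
  proof -
    have "1 - exp (c - d) \<le> d - c"
      using exp_ge_add_one_self[of "c - d"] by linarith
    then have "exp d * (1 - exp (c - d)) \<le> exp d * (d - c)"
      by (intro mult_left_mono) auto
    then show ?thesis
      by (simp add: algebra_simps exp_diff)
  qed
  show ?thesis
    using *[of a b] *[of b a] by (cases "a \<le> b") (auto simp: max_def)
qed

lemma abs_exp_diff_quotient_le:
  fixes x y z r :: real
  assumes "0 \<le> x" "y \<noteq> z" "\<bar>y\<bar> \<le> r" "\<bar>z\<bar> \<le> r"
  shows "\<bar>(x ^ k * exp (y * x) - x ^ k * exp (z * x)) / (y - z)\<bar> \<le> x ^ Suc k * exp (r * x)"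
proof -
  have "\<bar>exp (y * x) - exp (z * x)\<bar> \<le> \<bar>y * x - z * x\<bar> * exp (max (z * x) (y * x))"
    by (rule abs_exp_diff_le)
  also have "\<dots> \<le> \<bar>y - z\<bar> * x * exp (r * x)"
  proof -
    have "exp (max (z * x) (y * x)) \<le> exp (r * x)"
      using assms by (auto intro!: mult_right_mono)
    moreover have "\<bar>y * x - z * x\<bar> = \<bar>y - z\<bar> * x"
      using assms(1) by (simp add: abs_mult flip: left_diff_distrib)
    ultimately show ?thesis
      using assms(1) by (simp add: mult_left_mono)
  qed
  finally have "\<bar>exp (y * x) - exp (z * x)\<bar> \<le> \<bar>y - z\<bar> * x * exp (r * x)" .
  then have "x ^ k * \<bar>exp (y * x) - exp (z * x)\<bar> \<le> \<bar>y - z\<bar> * (x ^ Suc k * exp (r * x))"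
    using mult_left_mono[of _ _ "x ^ k"] assms(1) by (fastforce simp: mult_ac)
  then show ?thesis
    using assms(1,2) by (simp add: abs_mult divide_le_eq mult.commute flip: right_diff_distrib)
qed

lemma integral_dominated_convergence_at:
  fixes s :: "'b::first_countable_topology \<Rightarrow> 'a \<Rightarrow> real"
  assumes "f \<in> borel_measurable M" "\<And>y. s y \<in> borel_measurable M" "integrable M w"
    and lim: "AE x in M. ((\<lambda>y. s y x) \<longlongrightarrow> f x) (at z)"
    and bound: "\<forall>\<^sub>F y in at z. AE x in M. norm (s y x) \<le> w x"
  shows "((\<lambda>y. integral\<^sup>L M (s y)) \<longlongrightarrow> integral\<^sup>L M f) (at z)"
  unfolding tendsto_at_iff_sequentially comp_def
proof (intro allI impI)
  fix X :: "nat \<Rightarrow> 'b"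
  assume "\<forall>i. X i \<in> UNIV - {z}" "X \<longlonglongrightarrow> z"
  then have X: "filterlim X (at z) sequentially"
    by (auto simp: filterlim_at)
  from filterlim_iff[THEN iffD1, OF X, rule_format, OF bound]
  obtain N where w: "\<And>n. N \<le> n \<Longrightarrow> AE x in M. norm (s (X n) x) \<le> w x"
    by (auto simp: eventually_sequentially)
  show "(\<lambda>n. integral\<^sup>L M (s (X n))) \<longlonglongrightarrow> integral\<^sup>L M f"
  proof (rule LIMSEQ_offset, rule integral_dominated_convergence)
    show "AE x in M. norm (s (X (n + N)) x) \<le> w x" for n
      by (rule w) auto
    show "AE x in M. (\<lambda>n. s (X (n + N)) x) \<longlonglongrightarrow> f x"
      using lim by eventually_elim (intro LIMSEQ_ignore_initial_segment filterlim_compose[OF _ X])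
  qed (use assms in auto)
qed

locale nonneg_mgf_finite = prob_space W for W :: "real measure" +
  fixes lam :: real
  assumes sets_W: "sets W = sets borel"
    and AE_nonneg: "AE x in W. x \<ge> 0"
    and lam_pos: "lam > 0"
    and integrable_exp_lam: "integrable W (\<lambda>x. exp (lam * x))"
begin

lemma borel_measurable_W: "f \<in> borel_measurable borel \<Longrightarrow> f \<in> borel_measurable W"
  using measurable_cong_sets[OF sets_W refl] by auto

lemma integrable_power_exp:
  assumes "r < lam"
  shows "integrable W (\<lambda>x. x ^ j * exp (r * x))"
proof (rule Bochner_Integration.integrable_bound)
  define \<epsilon> where "\<epsilon> = lam - max r 0"
  have \<epsilon>: "\<epsilon> > 0" "r + \<epsilon> \<le> lam"
    using assms lam_pos unfolding \<epsilon>_def by auto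
  define C where "C = real j ^ j / \<epsilon> ^ j"
  have C: "C \<ge> 0"
    using \<epsilon> unfolding C_def by simp
  show "integrable W (\<lambda>x. C * exp (lam * x))"
    using integrable_exp_lam by simp
  show "(\<lambda>x. x ^ j * exp (r * x)) \<in> borel_measurable W"
    by (intro borel_measurable_W) measurable
  show "AE x in W. norm (x ^ j * exp (r * x)) \<le> norm (C * exp (lam * x))"
    using AE_nonneg
  proof eventually_elim
    fix x :: real
    assume x: "0 \<le> x"
    have "(\<epsilon> * x) ^ j \<le> real j ^ j * exp (\<epsilon> * x)"
      using power_le_exp[of "\<epsilon> * x" j] x \<epsilon> by auto
    then have "x ^ j \<le> C * exp (\<epsilon> * x)"
      using \<epsilon> unfolding C_def by (simp add: power_mult_distrib field_simps)
    then have "x ^ j * exp (r * x) \<le> C * exp (\<epsilon> * x) * exp (r * x)"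
      by (intro mult_right_mono) auto
    also have "\<dots> = C * exp ((r + \<epsilon>) * x)"
      by (simp add: exp_add[symmetric] algebra_simps)
    also have "\<dots> \<le> C * exp (lam * x)"
      using \<epsilon> x C by (intro mult_left_mono) (auto intro!: mult_right_mono)
    finally show "norm (x ^ j * exp (r * x)) \<le> norm (C * exp (lam * x))"
      using x C by simp
  qed
qed

lemma has_real_derivative_exp_moment:
  assumes z: "\<bar>z\<bar> < lam"
  shows "((\<lambda>y. \<integral>x. x ^ k * exp (y * x) \<partial>W) has_real_derivative
           (\<integral>x. x ^ Suc k * exp (z * x) \<partial>W)) (at z)"
proof -
  define \<delta> where "\<delta> = (lam - \<bar>z\<bar>) / 2"
  define r where "r = \<bar>z\<bar> + \<delta>"
  have \<delta>: "\<delta> > 0" and r: "r < lam"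
    using z unfolding \<delta>_def r_def by (simp_all add: field_simps)
  define s where "s y x = (x ^ k * exp (y * x) - x ^ k * exp (z * x)) / (y - z)" for y x
  have near: "\<forall>\<^sub>F y in at z. y \<noteq> z \<and> \<bar>y\<bar> \<le> r"
  proof -
    have "\<bar>y\<bar> \<le> r" if "\<bar>y - z\<bar> < \<delta>" for y
      using that abs_triangle_ineq[of z "y - z"] unfolding r_def by simp
    then show ?thesis
      unfolding eventually_at using \<delta> by (auto simp: dist_real_def)
  qed
  have "((\<lambda>y. \<integral>x. s y x \<partial>W) \<longlongrightarrow> (\<integral>x. x ^ Suc k * exp (z * x) \<partial>W)) (at z)"
  proof (rule integral_dominated_convergence_at)
    show "integrable W (\<lambda>x. x ^ Suc k * exp (r * x))"
      using r by (rule integrable_power_exp)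
    show "AE x in W. ((\<lambda>y. s y x) \<longlongrightarrow> x ^ Suc k * exp (z * x)) (at z)"
    proof (rule AE_I2)
      fix x :: real
      have "((\<lambda>y. x ^ k * exp (y * x)) has_real_derivative x ^ Suc k * exp (z * x)) (at z)"
        by (auto intro!: derivative_eq_intros)
      then show "((\<lambda>y. s y x) \<longlongrightarrow> x ^ Suc k * exp (z * x)) (at z)"
        unfolding has_field_derivative_iff s_def .
    qed
    show "\<forall>\<^sub>F y in at z. AE x in W. norm (s y x) \<le> x ^ Suc k * exp (r * x)"
      using near
    proof eventually_elim
      case (elim y)
      show ?case
        using AE_nonneg
      proof eventually_elim
        case (elim x)
        then show ?case
          unfolding s_def real_norm_def using \<open>y \<noteq> z \<and> \<bar>y\<bar> \<le> r\<close> r_def \<delta>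
          by (intro abs_exp_diff_quotient_le) auto
      qed
    qed
  qed (auto simp: s_def intro!: borel_measurable_W)
  moreover have "\<forall>\<^sub>F y in at z. (\<integral>x. s y x \<partial>W) =
      ((\<integral>x. x ^ k * exp (y * x) \<partial>W) - (\<integral>x. x ^ k * exp (z * x) \<partial>W)) / (y - z)"
    using near
  proof eventually_elim
    case (elim y)
    then have "y < lam"
      using r by auto
    then show ?case
      unfolding s_def using z by (simp add: integrable_power_exp)
  qed
  ultimately show ?thesis
    unfolding has_field_derivative_iff by (rule Lim_transform_eventually)
qed

lemma mgf_le_quadratic:
  fixes S :: real
  assumes mean: "(\<integral>x. x \<partial>W) = 1"
    and mgf'': "\<forall>z. \<bar>z\<bar> < lam / 2 \<longrightarrow> deriv (deriv (mgf W)) z \<le> 2 * S"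
    and z: "\<bar>z\<bar> \<le> lam / 2"
  shows "mgf W z \<le> 1 + z + S * z\<^sup>2"
proof (cases "z = 0")
  case True
  then show ?thesis
    by (simp add: mgf_def prob_space)
next
  case False
  define F where "F k y = (\<integral>x. x ^ k * exp (y * x) \<partial>W)" for k y
  have mgf_F: "mgf W = F 0"
    unfolding F_def mgf_def by simp
  have F': "(F k has_real_derivative F (Suc k) y) (at y)" if "\<bar>y\<bar> < lam" for k y
    unfolding F_def using that by (rule has_real_derivative_exp_moment)
  have F'': "deriv (deriv (F 0)) y = F 2 y" if "\<bar>y\<bar> < lam" for y
  proof -
    have "(deriv (F 0) has_real_derivative F 2 y) (at y)"
    proof (rule has_field_derivative_transform_within_open[where S = "{-lam<..<lam}"])
      show "(F 1 has_real_derivative F 2 y) (at y)"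
        using F'[OF that, of 1] by (simp add: numeral_2_eq_2)
      show "F 1 x = deriv (F 0) x" if "x \<in> {-lam<..<lam}" for x
        using DERIV_imp_deriv[OF F'[of x 0]] that by auto
    qed (use that in auto)
    then show ?thesis
      by (simp add: DERIV_imp_deriv)
  qed
  have "\<bar>z\<bar> < lam"
    using z lam_pos by linarith
  then have "\<exists>t. (if z < 0 then z < t \<and> t < 0 else 0 < t \<and> t < z) \<and>
      F 0 z = (\<Sum>m<2. F m 0 / fact m * (z - 0) ^ m) + F 2 t / fact 2 * (z - 0) ^ 2"
    using False by (intro Taylor[where a = "- \<bar>z\<bar>" and b = "\<bar>z\<bar>"]) (auto intro!: F')
  then obtain t where t: "if z < 0 then z < t \<and> t < 0 else 0 < t \<and> t < z"
    and taylor: "F 0 z = (\<Sum>m<2. F m 0 / fact m * z ^ m) + F 2 t / fact 2 * z ^ 2"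
    by auto
  from t have "\<bar>t\<bar> < \<bar>z\<bar>"
    by (auto split: if_splits)
  have "F 2 t \<le> 2 * S"
    using mgf''[rule_format, of t] F''[of t] \<open>\<bar>t\<bar> < \<bar>z\<bar>\<close> z lam_pos unfolding mgf_F by auto
  then have "F 2 t / fact 2 * z\<^sup>2 \<le> S * z\<^sup>2"
    using mult_right_mono[of "F 2 t" "2 * S" "z\<^sup>2"] by simp
  moreover have "F 0 0 = 1" "F 1 0 = 1"
    using mean unfolding F_def by (simp_all add: prob_space)
  ultimately show ?thesis
    unfolding mgf_F taylor by (simp add: lessThan_nat_numeral)
qed

end

(* Abel summation: peel off the smallest value of g and recurse on the strictly larger ones. *)
lemma sum_mult_nonneg_by_superlevel_sets:
  fixes c g :: "'a \<Rightarrow> real"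
  assumes "finite I" "\<And>x. x \<in> I \<Longrightarrow> g x \<ge> 0"
    and "\<And>t. t > 0 \<Longrightarrow> (\<Sum>x\<in>{x\<in>I. g x \<ge> t}. c x) \<ge> 0"
  shows "(\<Sum>x\<in>I. c x * g x) \<ge> 0"
  using assms
proof (induction "card I" arbitrary: I g rule: less_induct)
  case less
  show ?case
  proof (cases "I = {}")
    case False
    define m where "m = Min (g ` I)"
    have m: "m \<in> g ` I" "\<And>x. x \<in> I \<Longrightarrow> m \<le> g x"
      unfolding m_def using less.prems False by auto
    have "m \<ge> 0"
      using m less.prems by auto
    define I' where "I' = {x\<in>I. g x > m}"
    have "I' \<subset> I"
      using m unfolding I'_def by auto
    then have I': "card I' < card I" "finite I'"
      using less.prems(1) by (auto intro: psubset_card_mono finite_subset)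
    have "m * (\<Sum>x\<in>I. c x) \<ge> 0"
    proof (cases "m > 0")
      case True
      then have "(\<Sum>x\<in>{x\<in>I. g x \<ge> m}. c x) \<ge> 0"
        by (rule less.prems(3))
      moreover have "{x\<in>I. g x \<ge> m} = I"
        using m by auto
      ultimately show ?thesis
        using \<open>m \<ge> 0\<close> by simp
    qed (use \<open>m \<ge> 0\<close> in simp)
    moreover have "(\<Sum>x\<in>I'. c x * (g x - m)) \<ge> 0"
    proof (rule less.hyps[OF I'])
      fix t :: real
      assume "t > 0"
      moreover have "{x\<in>I'. g x - m \<ge> t} = {x\<in>I. g x \<ge> t + m}"
        using \<open>t > 0\<close> unfolding I'_def by auto
      ultimately show "(\<Sum>x\<in>{x\<in>I'. g x - m \<ge> t}. c x) \<ge> 0"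
        using less.prems(3)[of "t + m"] \<open>m \<ge> 0\<close> by simp
    qed (auto simp: I'_def)
    moreover have "(\<Sum>x\<in>I. c x * (g x - m)) = (\<Sum>x\<in>I'. c x * (g x - m))"
    proof (rule sum.mono_neutral_right)
      show "\<forall>x\<in>I - I'. c x * (g x - m) = 0"
        using m(2) unfolding I'_def by (fastforce simp: le_less)
    qed (use less.prems(1) \<open>I' \<subset> I\<close> in auto)
    moreover have "(\<Sum>x\<in>I. c x * g x) = m * (\<Sum>x\<in>I. c x) + (\<Sum>x\<in>I. c x * (g x - m))"
      by (simp add: sum_distrib_left sum.distrib[symmetric] algebra_simps)
    ultimately show ?thesis
      by linarith
  qed simp
qed

definition smaller_choice :: "nat \<Rightarrow> (nat \<Rightarrow> real) \<Rightarrow> (nat \<Rightarrow> nat \<Rightarrow> nat) \<Rightarrow> bool" where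
  "smaller_choice n b sel \<longleftrightarrow> (\<forall>i<n. \<forall>j<n. sel i j \<in> {i, j}
      \<and> (b i < b j \<longrightarrow> sel i j = i) \<and> (b j < b i \<longrightarrow> sel i j = j))"

lemma valid_sel_iff_smaller_choice: "valid_sel n Nw w sel \<longleftrightarrow> smaller_choice n (bval Nw w) sel"
  unfolding valid_sel_def smaller_choice_def ..

lemma smaller_choice_less:
  assumes "smaller_choice n b sel" "i < n" "j < n"
  shows "sel i j < n"
proof -
  have "sel i j \<in> {i, j}"
    using assms unfolding smaller_choice_def by blast
  with assms(2,3) show ?thesis
    by auto
qed

lemma two_choice_lower_set_prob:
  fixes p b :: "nat \<Rightarrow> real"
  assumes sel: "smaller_choice n b sel"
    and A: "A \<subseteq> {..<n}" and lower: "\<And>k l. k \<in> A \<Longrightarrow> l < n \<Longrightarrow> l \<notin> A \<Longrightarrow> b k < b l"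
    and p: "\<forall>i<n. p i \<ge> 0" "(\<Sum>i<n. p i) = 1"
  shows "(\<Sum>k\<in>A. p k) * (2 - (\<Sum>k\<in>A. p k))
           \<le> (\<Sum>i<n. \<Sum>j<n. if sel i j \<in> A then p i * p j else 0)"
proof -
  define q where "q = (\<Sum>k\<in>A. p k)"
  define pA where "pA i = (if i \<in> A then 0 else p i)" for i
  have "(\<Sum>i<n. if i \<in> A then p i else 0) = q"
    unfolding q_def sum.inter_restrict[OF finite_lessThan, symmetric] using A by (simp add: Int_absorb1)
  moreover have "(\<Sum>i<n. p i) = (\<Sum>i<n. pA i) + (\<Sum>i<n. if i \<in> A then p i else 0)"
    unfolding pA_def sum.distrib[symmetric] by (intro sum.cong) auto
  ultimately have pA: "(\<Sum>i<n. pA i) = 1 - q"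
    using p(2) by linarith
  \<comment> \<open>The ball lands in the lower set A as soon as one of the two samples does.\<close>
  have "(\<Sum>i<n. \<Sum>j<n. p i * p j - pA i * pA j)
          \<le> (\<Sum>i<n. \<Sum>j<n. if sel i j \<in> A then p i * p j else 0)"
  proof (intro sum_mono)
    fix i j
    assume ij: "i \<in> {..<n}" "j \<in> {..<n}"
    show "p i * p j - pA i * pA j \<le> (if sel i j \<in> A then p i * p j else 0)"
    proof (cases "i \<in> A \<or> j \<in> A")
      case True
      have sel_ij: "sel i j \<in> {i, j}" "b i < b j \<Longrightarrow> sel i j = i" "b j < b i \<Longrightarrow> sel i j = j"
        using sel ij unfolding smaller_choice_def by auto
      consider "i \<in> A" "j \<in> A" | "i \<in> A" "j \<notin> A" | "i \<notin> A" "j \<in> A"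
        using True by blast
      then have "sel i j \<in> A"
      proof cases
        case 1
        then show ?thesis
          using sel_ij(1) by auto
      next
        case 2
        then show ?thesis
          using sel_ij(2) lower ij by auto
      next
        case 3
        then show ?thesis
          using sel_ij(3) lower ij by auto
      qed
      then show ?thesis
        using True unfolding pA_def by auto
    qed (use p ij in \<open>auto simp: pA_def\<close>)
  qed
  moreover have "(\<Sum>i<n. \<Sum>j<n. p i * p j - pA i * pA j) = 1 - (1 - q)\<^sup>2"
    using p pA by (simp add: sum_subtractf sum_product[symmetric] power2_eq_square)
  ultimately show ?thesis
    unfolding q_def[symmetric] by (simp add: power2_eq_square algebra_simps)
qed

lemma two_choice_gain:
  fixes f u q \<mu> :: real
  assumes f: "0 \<le> f" "f \<le> 3/4" and \<mu>: "0 \<le> \<mu>" and u: "0 < u" "u \<le> 1" "4/5 + \<mu> \<le> u\<^sup>2"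
    and q: "f * u \<le> q" "q \<le> 1"
  shows "(1 + \<mu>) * f \<le> q * (2 - q)"
proof -
  have "u \<ge> 4/5"
  proof (rule ccontr)
    assume "\<not> u \<ge> 4/5"
    then have "u * u < 4/5 * (4/5)"
      using u by (intro mult_strict_mono) auto
    with u \<mu> show False
      by (simp add: power2_eq_square)
  qed
  then have "0 \<le> (u - 4/5) * (1 - u)"
    using u by simp
  moreover have "(u - 4/5) * (1 - u) = 9/5 * u - 4/5 - u\<^sup>2"
    by (simp add: power2_eq_square field_simps)
  ultimately have "u\<^sup>2 \<le> 9/5 * u - 4/5"
    by linarith
  then have "1 + \<mu> \<le> 2 * u - 3/4 * u\<^sup>2"
    using u by linarith
  moreover have "f * u\<^sup>2 \<le> 3/4 * u\<^sup>2"
    using f by (intro mult_right_mono) auto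
  ultimately have "1 + \<mu> \<le> 2 * u - f * u\<^sup>2"
    by linarith
  then have "(1 + \<mu>) * f \<le> (2 * u - f * u\<^sup>2) * f"
    using f(1) by (rule mult_right_mono)
  also have "\<dots> = (f * u) * (2 - f * u)"
    by (simp add: power2_eq_square algebra_simps)
  also have "\<dots> \<le> q * (2 - q)"
  proof -
    have "q * (2 - q) - (f * u) * (2 - f * u) = (q - f * u) * (2 - q - f * u)"
      by (simp add: algebra_simps)
    also have "\<dots> \<ge> 0"
      using q by (intro mult_nonneg_nonneg) auto
    finally show ?thesis
      by simp
  qed
  finally show ?thesis .
qed

lemma two_choice_lower_set_gain:
  fixes p b m :: "nat \<Rightarrow> real"
  assumes sel: "smaller_choice n b sel"
    and A: "A \<subseteq> {..<n}" and lower: "\<And>k l. k \<in> A \<Longrightarrow> l < n \<Longrightarrow> l \<notin> A \<Longrightarrow> b k < b l"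
    and p: "\<forall>i<n. p i \<ge> 0" "(\<Sum>i<n. p i) = 1"
    and p_lower: "\<And>k. k < n \<Longrightarrow> m k / (\<alpha> * N) \<le> p k"
    and m: "\<And>k. k < n \<Longrightarrow> m k \<ge> 0" and N: "N > 0"
    and \<mu>: "0 \<le> \<mu>" and \<alpha>: "\<alpha> \<ge> 1" "4/5 + \<mu> \<le> 1 / \<alpha>\<^sup>2"
    and weight: "(\<Sum>k\<in>A. m k) \<le> 3/4 * N"
  shows "(1 + \<mu>) * (\<Sum>k\<in>A. m k) \<le> N * (\<Sum>i<n. \<Sum>j<n. if sel i j \<in> A then p i * p j else 0)"
proof -
  define f where "f = (\<Sum>k\<in>A. m k) / N"
  define q where "q = (\<Sum>k\<in>A. p k)"
  have "f * (1 / \<alpha>) = (\<Sum>k\<in>A. m k / (\<alpha> * N))"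
    unfolding f_def by (simp add: sum_divide_distrib mult.commute)
  also have "\<dots> \<le> q"
    unfolding q_def using A p_lower by (intro sum_mono) auto
  finally have "f * (1 / \<alpha>) \<le> q" .
  moreover have "q \<le> 1"
    using A p sum_mono2[of "{..<n}" A p] unfolding q_def by auto
  moreover have "0 \<le> f" "f \<le> 3/4"
    using A m N weight unfolding f_def by (auto simp: sum_nonneg divide_le_eq subset_eq)
  ultimately have "(1 + \<mu>) * f \<le> q * (2 - q)"
    using \<mu> \<alpha> by (intro two_choice_gain[where u = "1 / \<alpha>"]) (auto simp: power_one_over)
  also have "\<dots> \<le> (\<Sum>i<n. \<Sum>j<n. if sel i j \<in> A then p i * p j else 0)"
    unfolding q_def using sel A lower p by (rule two_choice_lower_set_prob)
  finally have "N * ((1 + \<mu>) * f) \<le> N * (\<Sum>i<n. \<Sum>j<n. if sel i j \<in> A then p i * p j else 0)"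
    using N by (intro mult_left_mono) auto
  moreover have "N * ((1 + \<mu>) * f) = (1 + \<mu>) * (\<Sum>k\<in>A. m k)"
    unfolding f_def using N by simp
  ultimately show ?thesis
    by simp
qed

lemma two_choice_weighted_gain:
  fixes p b m g :: "nat \<Rightarrow> real"
  assumes sel: "smaller_choice n b sel"
    and p: "\<forall>i<n. p i \<ge> 0" "(\<Sum>i<n. p i) = 1"
    and p_lower: "\<And>k. k < n \<Longrightarrow> m k / (\<alpha> * N) \<le> p k"
    and m: "\<And>k. k < n \<Longrightarrow> m k \<ge> 0" and N: "N > 0"
    and \<mu>: "0 \<le> \<mu>" and \<alpha>: "\<alpha> \<ge> 1" "4/5 + \<mu> \<le> 1 / \<alpha>\<^sup>2"
    and g: "\<And>k. k < n \<Longrightarrow> g k \<ge> 0"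
    and g_antimono: "\<And>k l. k < n \<Longrightarrow> l < n \<Longrightarrow> g l < g k \<Longrightarrow> b k < b l"
    and weight: "(\<Sum>k\<in>{k\<in>{..<n}. 0 < g k}. m k) \<le> 3/4 * N"
  shows "(1 + \<mu>) * (\<Sum>k<n. m k * g k) \<le> N * (\<Sum>i<n. \<Sum>j<n. p i * p j * g (sel i j))"
proof -
  define I where "I = ({..<n} \<times> {..<n}) <+> {..<n}"
  define c where "c = case_sum (\<lambda>(i, j). N * (p i * p j)) (\<lambda>k. - (1 + \<mu>) * m k)"
  define G where "G = case_sum (\<lambda>(i, j). g (sel i j)) g"
  have sum_I: "(\<Sum>x\<in>I. h x) = (\<Sum>i<n. \<Sum>j<n. h (Inl (i, j))) + (\<Sum>k<n. h (Inr k))"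
    for h :: "(nat \<times> nat) + nat \<Rightarrow> real"
    unfolding I_def by (simp add: sum.Plus sum.cartesian_product)
  have c_simps: "c (Inl (i, j)) = N * (p i * p j)" "c (Inr k) = - (1 + \<mu>) * m k" for i j k
    unfolding c_def by simp_all
  have G_simps: "G (Inl (i, j)) = g (sel i j)" "G (Inr k) = g k" for i j k
    unfolding G_def by simp_all
  have "0 \<le> (\<Sum>x\<in>I. c x * G x)"
  proof (rule sum_mult_nonneg_by_superlevel_sets)
    show "finite I"
      unfolding I_def by simp
    show "0 \<le> G x" if "x \<in> I" for x
      using that g smaller_choice_less[OF sel] unfolding I_def G_def by (auto split: sum.split)
  next
    fix t :: real
    assume "t > 0"
    define A where "A = {k\<in>{..<n}. t \<le> g k}"
    have "(\<Sum>k\<in>A. m k) \<le> (\<Sum>k\<in>{k\<in>{..<n}. 0 < g k}. m k)"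
      unfolding A_def using \<open>t > 0\<close> m by (intro sum_mono2) auto
    then have "(1 + \<mu>) * (\<Sum>k\<in>A. m k) \<le> N * (\<Sum>i<n. \<Sum>j<n. if sel i j \<in> A then p i * p j else 0)"
      using sel p p_lower m N \<mu> \<alpha> weight g_antimono
      by (intro two_choice_lower_set_gain[where b = b]) (auto simp: A_def)
    moreover have "(\<Sum>x\<in>{x\<in>I. t \<le> G x}. c x)
        = N * (\<Sum>i<n. \<Sum>j<n. if sel i j \<in> A then p i * p j else 0) + - (1 + \<mu>) * (\<Sum>k\<in>A. m k)"
    proof -
      have "(\<Sum>x\<in>{x\<in>I. t \<le> G x}. c x) = (\<Sum>x\<in>I. if t \<le> G x then c x else 0)"
        by (rule sum.inter_filter) (simp add: I_def)
      also have "\<dots> = (\<Sum>i<n. \<Sum>j<n. if t \<le> g (sel i j) then N * (p i * p j) else 0)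
          + (\<Sum>k<n. if t \<le> g k then - (1 + \<mu>) * m k else 0)"
        unfolding sum_I c_simps G_simps ..
      also have "(\<Sum>i<n. \<Sum>j<n. if t \<le> g (sel i j) then N * (p i * p j) else 0)
          = N * (\<Sum>i<n. \<Sum>j<n. if sel i j \<in> A then p i * p j else 0)"
        unfolding sum_distrib_left by (intro sum.cong) (auto simp: A_def smaller_choice_less[OF sel])
      also have "(\<Sum>k<n. if t \<le> g k then - (1 + \<mu>) * m k else 0) = - (1 + \<mu>) * (\<Sum>k\<in>A. m k)"
        unfolding A_def sum.inter_filter[OF finite_lessThan] sum_distrib_left by (intro sum.cong) auto
      finally show ?thesis .
    qed
    ultimately show "0 \<le> (\<Sum>x\<in>{x\<in>I. t \<le> G x}. c x)"
      by linarith
  qed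
  also have "(\<Sum>x\<in>I. c x * G x)
      = N * (\<Sum>i<n. \<Sum>j<n. p i * p j * g (sel i j)) + - (1 + \<mu>) * (\<Sum>k<n. m k * g k)"
    unfolding sum_I c_simps G_simps sum_distrib_left by (simp only: mult.assoc)
  finally show ?thesis
    by linarith
qed

(* x_i of the paper: every one of the N_i slots of bin i carries this entry of the slot vector. *)
definition load_gap :: "nat \<Rightarrow> (nat \<Rightarrow> nat) \<Rightarrow> (nat \<Rightarrow> real) \<Rightarrow> nat \<Rightarrow> real" where
  "load_gap n Nw w i = bval Nw w i - (\<Sum>k<n. w k) / real (Ntot n Nw)"

abbreviation slot_list :: "nat \<Rightarrow> (nat \<Rightarrow> nat) \<Rightarrow> (nat \<Rightarrow> real) \<Rightarrow> real list" where
  "slot_list n Nw w \<equiv> concat (map (\<lambda>i. replicate (Nw i) (load_gap n Nw w i)) [0..<n])"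

lemma slot_vec_eq: "slot_vec n Nw w = rev (sort (slot_list n Nw w))"
  by (simp add: slot_vec_def load_gap_def)

lemma sum_list_map_concat_replicate:
  fixes f :: "'a \<Rightarrow> real"
  shows "sum_list (map f (concat (map (\<lambda>i. replicate (m i) (y i)) [0..<n])))
           = (\<Sum>i<n. real (m i) * f (y i))"
  by (induction n) (simp_all add: sum_list_replicate)

lemma length_filter_concat_replicate:
  "length (filter P (concat (map (\<lambda>i. replicate (m i) (y i)) [0..<n])))
     = (\<Sum>i<n. if P (y i) then m i else 0)"
  by (induction n) (simp_all add: filter_replicate)

lemma sum_list_map_rev_sort:
  fixes f :: "'a::linorder \<Rightarrow> 'b::comm_monoid_add"
  shows "sum_list (map f (rev (sort xs))) = sum_list (map f xs)"
proof -
  have "sum_list (map f (rev (sort xs))) = sum_mset (mset (map f (rev (sort xs))))"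
    by (simp only: sum_mset_sum_list)
  also have "\<dots> = sum_mset (mset (map f xs))"
    by simp
  finally show ?thesis
    by (simp only: sum_mset_sum_list)
qed

lemma Psi_slot_vec:
  "Psi a (slot_vec n Nw w) = (\<Sum>i<n. real (Nw i) * exp (- a * load_gap n Nw w i))"
proof -
  have "Psi a (slot_vec n Nw w) = sum_list (map (\<lambda>y. exp (- a * y)) (slot_list n Nw w))"
    unfolding Psi_def slot_vec_eq by (rule sum_list_map_rev_sort)
  then show ?thesis
    by (simp add: sum_list_map_concat_replicate)
qed

lemma load_gap_add_ball:
  assumes "k < n" "Nw k > 0"
  shows "load_gap n Nw (w(k := w k + x)) l
           = load_gap n Nw w l + (if l = k then x / real (Nw k) else 0) - x / real (Ntot n Nw)"
proof -
  have "(\<Sum>m<n. (w(k := w k + x)) m) = (\<Sum>m<n. w m + (if m = k then x else 0))"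
    by (intro sum.cong) auto
  also have "\<dots> = (\<Sum>m<n. w m) + x"
    using assms(1) by (simp add: sum.distrib)
  finally show ?thesis
    using assms(2) unfolding load_gap_def bval_def by (simp add: add_divide_distrib)
qed

lemma Psi_slot_vec_add_ball:
  assumes "k < n" "Nw k > 0"
  shows "Psi a (slot_vec n Nw (w(k := w k + x)))
           = exp (a / real (Ntot n Nw) * x) * (Psi a (slot_vec n Nw w)
               + real (Nw k) * exp (- a * load_gap n Nw w k) * (exp (- (a / real (Nw k)) * x) - 1))"
proof -
  define E where "E = exp (a / real (Ntot n Nw) * x)"
  define D where "D = exp (- (a / real (Nw k)) * x) - 1"
  have summand: "real (Nw l) * exp (- a * load_gap n Nw (w(k := w k + x)) l)
      = E * (real (Nw l) * exp (- a * load_gap n Nw w l))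
        + (if l = k then E * (real (Nw k) * exp (- a * load_gap n Nw w k)) * D else 0)" for l
  proof -
    have "exp (- a * load_gap n Nw (w(k := w k + x)) l)
        = E * exp (- a * load_gap n Nw w l) * (if l = k then D + 1 else 1)"
      unfolding load_gap_add_ball[where Nw = Nw, OF assms] E_def D_def
      by (simp add: exp_add[symmetric] exp_diff algebra_simps)
    then show ?thesis
      by (simp add: algebra_simps)
  qed
  show ?thesis
    unfolding Psi_slot_vec summand sum.distrib E_def[symmetric] D_def[symmetric]
    using assms(1) by (simp add: sum_distrib_left algebra_simps)
qed

lemma length_filter_less_rev_sort:
  fixes xs :: "'a::linorder list"
  assumes "1 \<le> K" "K \<le> length xs" "c \<le> rev (sort xs) ! (K - 1)"
  shows "length (filter (\<lambda>x. x < c) xs) \<le> length xs - K"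
proof -
  define ys where "ys = rev (sort xs)"
  have sorted: "sorted_wrt (\<ge>) ys"
    unfolding ys_def by (simp add: sorted_wrt_rev)
  have len: "length ys = length xs"
    unfolding ys_def by simp
  have "filter (\<lambda>x. x < c) (take K ys) = []"
  proof (rule filter_False, rule ballI)
    fix x
    assume "x \<in> set (take K ys)"
    then obtain i where i: "i < K" "x = ys ! i"
      using assms len by (auto simp: in_set_conv_nth)
    then have "ys ! (K - 1) \<le> x"
      using sorted assms len by (cases "i = K - 1") (auto intro: sorted_wrt_nth_less)
    then show "\<not> x < c"
      using assms(3) unfolding ys_def by simp
  qed
  then have "length (filter (\<lambda>x. x < c) ys) = length (filter (\<lambda>x. x < c) (drop K ys))"
    by (metis append_Nil append_take_drop_id filter_append)
  also have "\<dots> \<le> length xs - K"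
    using len by (metis length_drop length_filter_le)
  also have "length (filter (\<lambda>x. x < c) ys) = length (filter (\<lambda>x. x < c) xs)"
    unfolding ys_def by (metis mset_filter mset_rev mset_sort size_mset)
  finally show ?thesis .
qed

lemma negative_gap_weight_le:
  assumes "1 \<le> K" "K \<le> Ntot n Nw" "slot_at (slot_vec n Nw w) K \<ge> 0"
  shows "(\<Sum>i\<in>{i\<in>{..<n}. load_gap n Nw w i < 0}. real (Nw i)) \<le> real (Ntot n Nw) - real K"
proof -
  have len: "length (slot_list n Nw w) = Ntot n Nw"
    using length_filter_concat_replicate[of "\<lambda>_. True" Nw "load_gap n Nw w" n]
    unfolding Ntot_def by simp
  have "length (filter (\<lambda>x. x < 0) (slot_list n Nw w)) \<le> Ntot n Nw - K"
    using length_filter_less_rev_sort[of K "slot_list n Nw w" 0] assms len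
    by (simp add: slot_vec_eq slot_at_def)
  then have count: "(\<Sum>i<n. if load_gap n Nw w i < 0 then Nw i else 0) \<le> Ntot n Nw - K"
    unfolding length_filter_concat_replicate .
  have "(\<Sum>i\<in>{i\<in>{..<n}. load_gap n Nw w i < 0}. real (Nw i))
      = real (\<Sum>i<n. if load_gap n Nw w i < 0 then Nw i else 0)"
    unfolding of_nat_sum sum.inter_filter[OF finite_lessThan] by (intro sum.cong) auto
  also have "\<dots> \<le> real (Ntot n Nw - K)"
    using count by (simp only: of_nat_le_iff)
  also have "\<dots> = real (Ntot n Nw) - real K"
    using assms(2) by (rule of_nat_diff)
  finally show ?thesis .
qed

lemma negative_gap_weight_le_three_quarters:
  assumes "Ntot n Nw \<ge> 1" "slot_at (slot_vec n Nw w) (nat \<lceil>real (Ntot n Nw) / 4\<rceil>) \<ge> 0"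
  shows "(\<Sum>i\<in>{i\<in>{..<n}. load_gap n Nw w i < 0}. real (Nw i)) \<le> 3/4 * real (Ntot n Nw)"
proof -
  define K where "K = nat \<lceil>real (Ntot n Nw) / 4\<rceil>"
  have "1 \<le> K" "K \<le> Ntot n Nw" "real (Ntot n Nw) / 4 \<le> real K"
    using assms(1) unfolding K_def by (auto simp: le_nat_iff nat_le_iff ceiling_le_iff)
  then show ?thesis
    using negative_gap_weight_le[of K n Nw w] assms(2) unfolding K_def by linarith
qed

context nonneg_mgf_finite
begin

lemma integral_Psi_add_ball_le:
  fixes S :: real
  assumes mgf: "\<And>z. \<bar>z\<bar> \<le> lam / 2 \<Longrightarrow> mgf W z \<le> 1 + z + S * z\<^sup>2" and S: "S \<ge> 0"
    and k: "k < n" "Nw k > 0" and N: "Ntot n Nw > 0" and a: "0 < a" "a \<le> lam / 2"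
  shows "(\<integral>x. Psi a (slot_vec n Nw (w(k := w k + x))) \<partial>W)
           \<le> Psi a (slot_vec n Nw w) * (1 + a / real (Ntot n Nw) + S * (a / real (Ntot n Nw))\<^sup>2)
             - a * (1 - S * a) * exp (- a * load_gap n Nw w k)"
proof -
  define \<Psi> where "\<Psi> = Psi a (slot_vec n Nw w)"
  define e where "e = exp (- a * load_gap n Nw w k)"
  define b where "b = a / real (Ntot n Nw)"
  define d where "d = a / real (Nw k)"
  have "\<Psi> \<ge> 0"
    unfolding \<Psi>_def Psi_slot_vec by (intro sum_nonneg) simp
  have b: "0 \<le> b" "b \<le> a" and d: "0 \<le> d" "d \<le> a"
    using a N k unfolding b_def d_def by (auto simp: divide_le_eq)
  have e: "e > 0"
    unfolding e_def by simp
  have int: "integrable W (\<lambda>x. exp (r * x))" if "r \<le> a" for r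
    using integrable_power_exp[of r 0] that a lam_pos by simp
  have "(\<integral>x. exp ((b - d) * x) - exp (b * x) \<partial>W) \<le> (\<integral>x. exp (- d * x) - 1 \<partial>W)"
  proof (rule integral_mono_AE)
    show "AE x in W. exp ((b - d) * x) - exp (b * x) \<le> exp (- d * x) - 1"
      using AE_nonneg
    proof eventually_elim
      fix x :: real
      assume "0 \<le> x"
      then have "exp (b * x) * (exp (- d * x) - 1) \<le> 1 * (exp (- d * x) - 1)"
        using b d by (intro mult_right_mono_neg) auto
      then show "exp ((b - d) * x) - exp (b * x) \<le> exp (- d * x) - 1"
        by (simp add: algebra_simps exp_add[symmetric])
    qed
  qed (use int[of "b - d"] int[of b] int[of "- d"] b d in auto)
  also have "\<dots> = mgf W (- d) - 1"
    using int[of "- d"] d by (simp add: mgf_def prob_space)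
  finally have ball: "(\<integral>x. exp ((b - d) * x) - exp (b * x) \<partial>W) \<le> mgf W (- d) - 1" .
  have "(\<integral>x. Psi a (slot_vec n Nw (w(k := w k + x))) \<partial>W)
      = (\<integral>x. \<Psi> * exp (b * x) + real (Nw k) * e * (exp ((b - d) * x) - exp (b * x)) \<partial>W)"
    unfolding Psi_slot_vec_add_ball[where Nw = Nw, OF k] \<Psi>_def e_def b_def d_def
    by (simp add: algebra_simps exp_add[symmetric])
  also have "\<dots> = \<Psi> * mgf W b + real (Nw k) * e * (\<integral>x. exp ((b - d) * x) - exp (b * x) \<partial>W)"
    using int b d by (simp add: mgf_def)
  also have "\<dots> \<le> \<Psi> * mgf W b + real (Nw k) * e * (mgf W (- d) - 1)"
    using ball e by (intro add_left_mono mult_left_mono) auto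
  also have "\<dots> \<le> \<Psi> * (1 + b + S * b\<^sup>2) + real (Nw k) * e * (- d + S * d\<^sup>2)"
    using mgf[of b] mgf[of "- d"] b d a \<open>\<Psi> \<ge> 0\<close> e
    by (intro add_mono mult_left_mono) auto
  also have "\<dots> = \<Psi> * (1 + b + S * b\<^sup>2) + e * (- a + S * a\<^sup>2 / real (Nw k))"
    using k unfolding d_def by (simp add: field_simps power2_eq_square)
  also have "\<dots> \<le> \<Psi> * (1 + b + S * b\<^sup>2) + e * (- a + S * a\<^sup>2)"
  proof -
    have "S * a\<^sup>2 / real (Nw k) \<le> S * a\<^sup>2 / 1"
      using k S by (intro divide_left_mono) auto
    then show ?thesis
      using e by (intro add_left_mono mult_left_mono) auto
  qed
  also have "\<dots> = \<Psi> * (1 + b + S * b\<^sup>2) - a * (1 - S * a) * e"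
    by (simp add: algebra_simps power2_eq_square)
  finally show ?thesis
    unfolding \<Psi>_def e_def b_def .
qed

lemma step_exp_le:
  fixes S :: real
  assumes mgf: "\<And>z. \<bar>z\<bar> \<le> lam / 2 \<Longrightarrow> mgf W z \<le> 1 + z + S * z\<^sup>2" and S: "S \<ge> 0"
    and Nw: "\<forall>i<n. Nw i > 0" and N: "Ntot n Nw > 0" and a: "0 < a" "a \<le> lam / 2"
    and sel: "valid_sel n Nw w sel" and p: "\<forall>i<n. p i \<ge> 0" "(\<Sum>i<n. p i) = 1"
  shows "step_exp n Nw p W sel a w
           \<le> Psi a (slot_vec n Nw w) * (1 + a / real (Ntot n Nw) + S * (a / real (Ntot n Nw))\<^sup>2)
             - a * (1 - S * a) * (\<Sum>i<n. \<Sum>j<n. p i * p j * exp (- a * load_gap n Nw w (sel i j)))"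
proof -
  define B where "B = Psi a (slot_vec n Nw w) * (1 + a / real (Ntot n Nw) + S * (a / real (Ntot n Nw))\<^sup>2)"
  define c where "c = a * (1 - S * a)"
  have "sel i j < n" if "i < n" "j < n" for i j
    using sel that unfolding valid_sel_iff_smaller_choice by (rule smaller_choice_less)
  then have "step_exp n Nw p W sel a w
      \<le> (\<Sum>i<n. \<Sum>j<n. p i * p j * (B - c * exp (- a * load_gap n Nw w (sel i j))))"
    unfolding step_exp_def B_def c_def using p Nw
    by (intro sum_mono mult_left_mono integral_Psi_add_ball_le[OF mgf S _ _ N a]) auto
  also have "\<dots> = B * (\<Sum>i<n. \<Sum>j<n. p i * p j)
      - c * (\<Sum>i<n. \<Sum>j<n. p i * p j * exp (- a * load_gap n Nw w (sel i j)))"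
    by (simp add: sum_subtractf sum_distrib_left algebra_simps)
  also have "(\<Sum>i<n. \<Sum>j<n. p i * p j) = 1"
    using p by (simp add: sum_product[symmetric])
  finally show ?thesis
    unfolding B_def c_def by simp
qed

end

lemma two_choice_exp_sum_ge:
  fixes p :: "nat \<Rightarrow> real"
  assumes N: "Ntot n Nw > 0" and \<mu>: "0 \<le> \<mu>" and \<alpha>: "\<alpha> \<ge> 1" "4/5 + \<mu> \<le> 1 / \<alpha>\<^sup>2"
    and p: "\<forall>i<n. p i \<ge> 0" "(\<Sum>i<n. p i) = 1"
    and p_lower: "\<forall>i<n. real (Nw i) / (\<alpha> * real (Ntot n Nw)) \<le> p i"
    and sel: "valid_sel n Nw w sel" and a: "a > 0"
    and heavy: "(\<Sum>i\<in>{i\<in>{..<n}. load_gap n Nw w i < 0}. real (Nw i)) \<le> 3/4 * real (Ntot n Nw)"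
  shows "(1 + \<mu>) * (Psi a (slot_vec n Nw w) - real (Ntot n Nw))
           \<le> real (Ntot n Nw) * (\<Sum>i<n. \<Sum>j<n. p i * p j * exp (- a * load_gap n Nw w (sel i j)))"
proof -
  \<comment> \<open>Only bins with negative gap have g > 0, so every superlevel set of g weighs at most 3N/4.\<close>
  define e where "e k = exp (- a * load_gap n Nw w k)" for k
  define g where "g k = max (e k - 1) 0" for k
  have e_less_iff: "e l < e k \<longleftrightarrow> load_gap n Nw w k < load_gap n Nw w l" for k l
    unfolding e_def using a by simp
  have Psi_le: "Psi a (slot_vec n Nw w) - real (Ntot n Nw) \<le> (\<Sum>k<n. real (Nw k) * g k)"
  proof -
    have "Psi a (slot_vec n Nw w) \<le> (\<Sum>k<n. real (Nw k) * g k + real (Nw k))"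
      unfolding Psi_slot_vec e_def[symmetric]
    proof (intro sum_mono)
      fix k
      have "e k \<le> g k + 1"
        unfolding g_def by simp
      then show "real (Nw k) * e k \<le> real (Nw k) * g k + real (Nw k)"
        using mult_left_mono[of "e k" "g k + 1" "real (Nw k)"] by (simp add: distrib_left)
    qed
    then show ?thesis
      by (simp add: sum.distrib Ntot_def)
  qed
  have gain: "(1 + \<mu>) * (\<Sum>k<n. real (Nw k) * g k)
      \<le> real (Ntot n Nw) * (\<Sum>i<n. \<Sum>j<n. p i * p j * g (sel i j))"
  proof (rule two_choice_weighted_gain[where b = "bval Nw w"])
    show "smaller_choice n (bval Nw w) sel"
      using sel unfolding valid_sel_iff_smaller_choice .
    show "bval Nw w k < bval Nw w l" if "g l < g k" for k l
      using that e_less_iff[of l k] unfolding g_def load_gap_def by (auto simp: max_def split: if_splits)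
    have "{k\<in>{..<n}. 0 < g k} \<subseteq> {i\<in>{..<n}. load_gap n Nw w i < 0}"
      using e_less_iff[of 0 0] a unfolding g_def e_def by (auto simp: max_def mult_less_0_iff split: if_splits)
    then have "(\<Sum>k\<in>{k\<in>{..<n}. 0 < g k}. real (Nw k))
        \<le> (\<Sum>i\<in>{i\<in>{..<n}. load_gap n Nw w i < 0}. real (Nw i))"
      by (intro sum_mono2) auto
    then show "(\<Sum>k\<in>{k\<in>{..<n}. 0 < g k}. real (Nw k)) \<le> 3/4 * real (Ntot n Nw)"
      using heavy by linarith
  qed (use p p_lower N \<mu> \<alpha> in \<open>auto simp: g_def\<close>)
  have "(1 + \<mu>) * (Psi a (slot_vec n Nw w) - real (Ntot n Nw)) \<le> (1 + \<mu>) * (\<Sum>k<n. real (Nw k) * g k)"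
    using Psi_le \<mu> by (intro mult_left_mono) auto
  also have "\<dots> \<le> real (Ntot n Nw) * (\<Sum>i<n. \<Sum>j<n. p i * p j * g (sel i j))"
    by (rule gain)
  also have "\<dots> \<le> real (Ntot n Nw) * (\<Sum>i<n. \<Sum>j<n. p i * p j * e (sel i j))"
    unfolding g_def using p by (intro mult_left_mono sum_mono) (auto simp: e_def)
  finally show ?thesis
    unfolding e_def .
qed

lemma drift_inequality:
  fixes E \<Psi> Q N a S \<mu> :: real
  assumes N: "N \<ge> 1" and \<Psi>: "\<Psi> \<ge> 0" and a: "a > 0" and S: "S \<ge> 0" and \<mu>: "\<mu> > 0"
    and small: "S * a * (2 + \<mu>) \<le> \<mu> / 4" "a * (1 + \<mu>) \<le> 1"
    and E: "E \<le> \<Psi> * (1 + a / N + S * (a / N)\<^sup>2) - a * (1 - S * a) * Q"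
    and Q: "(1 + \<mu>) * (\<Psi> - N) \<le> N * Q"
  shows "E \<le> (1 - 3 * \<mu> * a / (4 * N)) * \<Psi> + 1"
proof -
  define c where "c = a * (1 - S * a)"
  have "\<mu> / 4 \<le> 1/4 * (2 + \<mu>)"
    by simp
  with small(1) have "S * a * (2 + \<mu>) \<le> 1/4 * (2 + \<mu>)"
    by (rule order_trans)
  then have "S * a \<le> 1/4"
    using \<mu> by (simp add: mult_le_cancel_right)
  then have c: "0 \<le> c" "c * (1 + \<mu>) \<le> 1"
    using a S small(2) \<mu> unfolding c_def by (auto intro!: order_trans[OF mult_right_mono small(2)])
  have "(1 + \<mu>) * (\<Psi> - N) / N \<le> Q"
    using Q N by (simp add: pos_divide_le_eq mult.commute)
  then have "c * ((1 + \<mu>) * (\<Psi> - N) / N) \<le> c * Q"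
    using c(1) by (rule mult_left_mono)
  then have "\<Psi> * (1 + a / N + S * (a / N)\<^sup>2) - c * Q
      \<le> \<Psi> * (1 + a / N + S * (a / N)\<^sup>2) - c * ((1 + \<mu>) * (\<Psi> - N) / N)"
    by (rule diff_left_mono)
  with E have "E \<le> \<Psi> * (1 + a / N + S * (a / N)\<^sup>2) - c * ((1 + \<mu>) * (\<Psi> - N) / N)"
    unfolding c_def by (rule order_trans)
  also have "\<dots> = \<Psi> * (1 + a / N + S * (a / N)\<^sup>2 - c * (1 + \<mu>) / N) + c * (1 + \<mu>)"
    using N by (simp add: field_simps)
  also have "\<dots> \<le> \<Psi> * (1 - 3 * \<mu> * a / (4 * N)) + 1"
  proof -
    have "S * a / N \<le> S * a"
      using divide_left_mono[of 1 N "S * a"] N S a by simp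
    then have "- \<mu> + S * a / N + S * a * (1 + \<mu>) \<le> - \<mu> + S * a + S * a * (1 + \<mu>)"
      by simp
    also have "\<dots> = - \<mu> + S * a * (2 + \<mu>)"
      by (simp add: algebra_simps)
    also have "\<dots> \<le> - 3 * \<mu> / 4"
      using small(1) by simp
    finally have "- \<mu> + S * a / N + S * a * (1 + \<mu>) \<le> - 3 * \<mu> / 4" .
    then have bound: "a / N * (- \<mu> + S * a / N + S * a * (1 + \<mu>)) \<le> a / N * (- 3 * \<mu> / 4)"
      using a N by (intro mult_left_mono) auto
    have "1 + a / N + S * (a / N)\<^sup>2 - c * (1 + \<mu>) / N
        = 1 + a / N * (- \<mu> + S * a / N + S * a * (1 + \<mu>))"
      using N unfolding c_def by (simp add: field_simps power2_eq_square)
    also have "\<dots> \<le> 1 + a / N * (- 3 * \<mu> / 4)"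
      using bound by simp
    also have "\<dots> = 1 - 3 * \<mu> * a / (4 * N)"
      using N by (simp add: field_simps)
    finally have "1 + a / N + S * (a / N)\<^sup>2 - c * (1 + \<mu>) / N \<le> 1 - 3 * \<mu> * a / (4 * N)" .
    then show ?thesis
      using \<Psi> c by (intro add_mono mult_left_mono) auto
  qed
  finally show ?thesis
    by (simp add: mult.commute)
qed

lemma expected_Psi_drift:
  fixes S \<mu> \<alpha> :: real and W :: "real measure"
  assumes W: "prob_space W" "sets W = sets borel" "AE x in W. x \<ge> 0" "integral\<^sup>L W (\<lambda>x. x) = 1"
    and lam: "integrable W (\<lambda>x. exp (lam * x))" "lam > 0"
    and mgf'': "\<forall>z. \<bar>z\<bar> < lam / 2 \<longrightarrow> deriv (deriv (mgf W)) z \<le> 2 * S" and S: "S \<ge> 0"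
    and \<mu>: "\<mu> > 0" and Nw: "n \<ge> 1" "\<forall>i<n. Nw i > 0"
    and p: "\<forall>i<n. p i \<ge> 0" "(\<Sum>i<n. p i) = 1" "\<forall>i<n. real (Nw i) / (\<alpha> * real (Ntot n Nw)) \<le> p i"
    and \<alpha>: "\<alpha> \<ge> 1" "4/5 + \<mu> \<le> 1 / \<alpha>\<^sup>2"
    and a: "0 < a" "a \<le> lam / 2" "S * a * (2 + \<mu>) \<le> \<mu> / 4" "a * (1 + \<mu>) \<le> 1"
    and sel: "valid_sel n Nw w sel"
    and quarter: "slot_at (slot_vec n Nw w) (nat \<lceil>real (Ntot n Nw) / 4\<rceil>) \<ge> 0"
  shows "step_exp n Nw p W sel a w
           \<le> (1 - 3 * \<mu> * a / (4 * real (Ntot n Nw))) * Psi a (slot_vec n Nw w) + 1"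
proof -
  interpret nonneg_mgf_finite W lam
    using W lam by (simp add: nonneg_mgf_finite_def nonneg_mgf_finite_axioms_def)
  have N: "Ntot n Nw \<ge> 1"
  proof -
    have "Nw 0 \<le> Ntot n Nw"
      unfolding Ntot_def using Nw(1) by (intro member_le_sum) auto
    then show ?thesis
      using Nw by fastforce
  qed
  have mgf: "mgf W z \<le> 1 + z + S * z\<^sup>2" if "\<bar>z\<bar> \<le> lam / 2" for z
    using mgf_le_quadratic W(4) mgf'' that by blast
  have "step_exp n Nw p W sel a w
      \<le> Psi a (slot_vec n Nw w) * (1 + a / real (Ntot n Nw) + S * (a / real (Ntot n Nw))\<^sup>2)
        - a * (1 - S * a) * (\<Sum>i<n. \<Sum>j<n. p i * p j * exp (- a * load_gap n Nw w (sel i j)))"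
    using mgf S Nw(2) N a(1,2) sel p(1,2) by (intro step_exp_le) auto
  moreover have "(1 + \<mu>) * (Psi a (slot_vec n Nw w) - real (Ntot n Nw))
      \<le> real (Ntot n Nw) * (\<Sum>i<n. \<Sum>j<n. p i * p j * exp (- a * load_gap n Nw w (sel i j)))"
    using N \<mu> \<alpha> p sel a(1) negative_gap_weight_le_three_quarters[OF N quarter]
    by (intro two_choice_exp_sum_ge) auto
  moreover have "Psi a (slot_vec n Nw w) \<ge> 0"
    unfolding Psi_slot_vec by (intro sum_nonneg) simp
  ultimately show ?thesis
    using N S \<mu> a by (intro drift_inequality) auto
qed

theorem mainTheorem12:
  fixes S \<mu> :: real
  assumes "S \<ge> 1" and "\<mu> > 0"
  shows "\<exists>a0 > 0. \<forall>(n::nat) (Nw::nat \<Rightarrow> nat) (p::nat \<Rightarrow> real) (W::real measure)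
           (\<alpha>::real) (\<beta>::real) (lam::real) (a::real) (w::nat \<Rightarrow> real) (sel::nat \<Rightarrow> nat \<Rightarrow> nat).
     n \<ge> 1 \<and> (\<forall>i<n. Nw i > 0)
     \<and> \<alpha> \<ge> 1 \<and> \<beta> \<ge> 1 \<and> 1 / \<alpha>^2 \<ge> 4/5 + \<mu>
     \<and> (\<forall>i<n. p i \<ge> 0) \<and> (\<Sum>i<n. p i) = 1
     \<and> (\<forall>i<n. real (Nw i) / (\<alpha> * real (Ntot n Nw)) \<le> p i
              \<and> p i \<le> \<beta> * real (Nw i) / real (Ntot n Nw))
     \<and> prob_space W \<and> sets W = sets borel \<and> (AE x in W. x \<ge> 0)
     \<and> integrable W (\<lambda>x. x) \<and> integral\<^sup>L W (\<lambda>x. x) = 1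
     \<and> lam > 0 \<and> integrable W (\<lambda>x. exp (lam * x))
     \<and> (\<forall>z. \<bar>z\<bar> < lam / 2 \<longrightarrow> deriv (deriv (mgf W)) z \<le> 2 * S)
     \<and> 0 < a \<and> a \<le> min a0 (lam / 2)
     \<and> (\<forall>i<n. w i \<ge> 0)
     \<and> valid_sel n Nw w sel
     \<and> slot_at (slot_vec n Nw w) (nat \<lceil>real (Ntot n Nw) / 4\<rceil>) \<ge> 0
     \<longrightarrow> step_exp n Nw p W sel a w
           \<le> (1 - 3 * \<mu> * a / (4 * real (Ntot n Nw))) * Psi a (slot_vec n Nw w) + 1"
proof -
  define a0 where "a0 = min (\<mu> / (4 * S * (2 + \<mu>))) (1 / (1 + \<mu>))"
  have "a0 > 0"
    using assms unfolding a0_def by auto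
  have small: "S * a * (2 + \<mu>) \<le> \<mu> / 4" "a * (1 + \<mu>) \<le> 1" if "a \<le> a0" for a
  proof -
    have "a * (4 * S * (2 + \<mu>)) \<le> \<mu>" "a * (1 + \<mu>) \<le> 1"
      using that assms unfolding a0_def by (simp_all add: pos_le_divide_eq)
    then show "S * a * (2 + \<mu>) \<le> \<mu> / 4" "a * (1 + \<mu>) \<le> 1"
      by (simp_all add: algebra_simps)
  qed
  have "step_exp n Nw p W sel a w
           \<le> (1 - 3 * \<mu> * a / (4 * real (Ntot n Nw))) * Psi a (slot_vec n Nw w) + 1"
    if "n \<ge> 1" "\<forall>i<n. Nw i > 0" "\<alpha> \<ge> 1" "1 / \<alpha>^2 \<ge> 4/5 + \<mu>" "\<forall>i<n. p i \<ge> 0" "(\<Sum>i<n. p i) = 1"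
      "\<forall>i<n. real (Nw i) / (\<alpha> * real (Ntot n Nw)) \<le> p i"
      "prob_space W" "sets W = sets borel" "AE x in W. x \<ge> 0" "integral\<^sup>L W (\<lambda>x. x) = 1"
      "lam > 0" "integrable W (\<lambda>x. exp (lam * x))"
      "\<forall>z. \<bar>z\<bar> < lam / 2 \<longrightarrow> deriv (deriv (mgf W)) z \<le> 2 * S"
      "0 < a" "a \<le> a0" "a \<le> lam / 2" "valid_sel n Nw w sel"
      "slot_at (slot_vec n Nw w) (nat \<lceil>real (Ntot n Nw) / 4\<rceil>) \<ge> 0"
    for n Nw p W \<alpha> lam a w sel
    using that small[OF \<open>a \<le> a0\<close>] assms
    by (intro expected_Psi_drift[where lam = lam and \<alpha> = \<alpha>]) simp_all
  with \<open>a0 > 0\<close> show ?thesis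
    by (intro exI[of _ a0]) auto
qed

end
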